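(* Let $Q\in N_\kappa(H)$ have the representation $Q(z)=\Gamma_0^+(A-z)^{-1}\Gamma_0$, where $A$ is a bounded self-adjoint operator in a Pontryagin space $K$, $\Gamma_0:H\to K$ is bounded, and $\Gamma_0^+\Gamma_0$ is boundedly invertible (the representation need not be minimal). Let $P:=\Gamma_0(\Gamma_0^+\Gamma_0)^{-1}\Gamma_0^+$ and let $\tilde A:=(I-P)A(I-P)$, regarded as a bounded self-adjoint operator in the Pontryagin space $(I-P)K$; for $z\in\rho(\tilde A)$ let $(I-P)(\tilde A-z)^{-1}(I-P)$ denote the operator on $K$ equal to $(\tilde A-z)^{-1}$ on $(I-P)K$ and to $0$ on $PK$. Then for every $z\in\rho(A)\cap\rho(\tilde A)$, $Q(z)$ is boundedly invertible and $\hat Q(z):=-Q(z)^{-1}$ is given by $$\hat Q(z)=(\Gamma_0^+\Gamma_0)^{-1}\Gamma_0^+\Big\{A(I-P)(\tilde A-z)^{-1}(I-P)A-(A-z)\Big\}\Gamma_0(\Gamma_0^+\Gamma_0)^{-1}.$$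
   Context: $H$ is a Hilbert space with inner product $(\cdot,\cdot)$; $(K,[\cdot,\cdot])$ is a Pontryagin space (Krein space with finitely many negative squares). For bounded $\Gamma_0:H\to K$, $\Gamma_0^+:K\to H$ is defined by $(h,\Gamma_0^+k)=[\Gamma_0h,k]$. $N_\kappa(H)$ is the class of generalized Nevanlinna functions: $Q$ meromorphic in $\mathbb{C}\setminus\mathbb{R}$ with values in bounded operators on $H$, $Q(\bar z)^*=Q(z)$, and the kernel $\frac{Q(z)-Q(w)^*}{z-\bar w}$ has exactly $\kappa$ negative squares. $P$ is an orthogonal projection in $K$ with $PK=\Gamma_0(H)$, $(I-P)K=\ker\Gamma_0^+$, and $K=(I-P)K[+]PK$. *)

theory Defs
  imports "HOL-Analysis.Analysis"
begin

class complex_vector = real_vector +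
  fixes scaleC :: "complex \<Rightarrow> 'a \<Rightarrow> 'a" (infixr "*\<^sub>C" 75)
  assumes scaleR_scaleC: "scaleR r x = scaleC (complex_of_real r) x"
    and scaleC_add_right: "scaleC a (x + y) = scaleC a x + scaleC a y"
    and scaleC_add_left: "scaleC (a + b) x = scaleC a x + scaleC b x"
    and scaleC_scaleC: "scaleC a (scaleC b x) = scaleC (a * b) x"
    and scaleC_one: "scaleC 1 x = x"

class complex_inner = complex_vector + real_normed_vector +
  fixes cinner :: "'a \<Rightarrow> 'a \<Rightarrow> complex"
  assumes cinner_commute: "cinner x y = cnj (cinner y x)"
    and cinner_add_left: "cinner (x + y) z = cinner x z + cinner y z"
    and cinner_scaleC_left: "cinner (scaleC a x) y = cnj a * cinner x y"
    and cinner_ge_zero: "0 \<le> Re (cinner x x)"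
    and cinner_eq_zero_iff: "cinner x x = 0 \<longleftrightarrow> x = 0"
    and norm_eq_sqrt_cinner: "norm x = sqrt (Re (cinner x x))"

class complex_hilbert = complex_inner + complete_space

definition clinear :: "('a::complex_vector \<Rightarrow> 'b::complex_vector) \<Rightarrow> bool" where
  "clinear f \<longleftrightarrow> (\<forall>x y. f (x + y) = f x + f y) \<and> (\<forall>a x. f (a *\<^sub>C x) = a *\<^sub>C f x)"

definition bounded_clinear ::
  "('a::{complex_vector,real_normed_vector} \<Rightarrow> 'b::{complex_vector,real_normed_vector}) \<Rightarrow> bool" where
  "bounded_clinear f \<longleftrightarrow> clinear f \<and> (\<exists>C. \<forall>x. norm (f x) \<le> norm x * C)"

definition boundedly_invertible ::
  "('a::{complex_vector,real_normed_vector} \<Rightarrow> 'b::{complex_vector,real_normed_vector}) \<Rightarrow> bool" where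
  "boundedly_invertible T \<longleftrightarrow> bij T \<and> bounded_clinear (inv T)"

text \<open>A Pontryagin space is modelled as a complex Hilbert space together with a
  fundamental symmetry J (bounded, J^2 = I, J selfadjoint) whose negative
  eigenspace {x. J x = -x} is finite dimensional; the indefinite inner product
  is [x,y] = (J x, y).\<close>
definition pontryagin_symmetry :: "('k::complex_hilbert \<Rightarrow> 'k) \<Rightarrow> bool" where
  "pontryagin_symmetry J \<longleftrightarrow>
     bounded_clinear J \<and> (\<forall>x. J (J x) = x) \<and> (\<forall>x y. cinner (J x) y = cinner x (J y)) \<and>
     (\<exists>(n::nat) (e::nat \<Rightarrow> 'k). \<forall>x. J x = - x \<longrightarrow> (\<exists>c. x = (\<Sum>i<n. c i *\<^sub>C e i)))"

definition kinner :: "('k::complex_hilbert \<Rightarrow> 'k) \<Rightarrow> 'k \<Rightarrow> 'k \<Rightarrow> complex" where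
  "kinner J x y = cinner (J x) y"

definition resolvent_op :: "'k set \<Rightarrow> ('k::complex_hilbert \<Rightarrow> 'k) \<Rightarrow> complex \<Rightarrow> 'k \<Rightarrow> 'k" where
  "resolvent_op M T z = inv_into M (\<lambda>x. T x - z *\<^sub>C x)"

definition in_resolvent_set :: "'k set \<Rightarrow> ('k::complex_hilbert \<Rightarrow> 'k) \<Rightarrow> complex \<Rightarrow> bool" where
  "in_resolvent_set M T z \<longleftrightarrow>
     bij_betw (\<lambda>x. T x - z *\<^sub>C x) M M \<and>
     (\<exists>C. \<forall>y\<in>M. norm (resolvent_op M T z y) \<le> C * norm y)"

end

theory Submission
  imports Defs
begin

text \<open>
  Write G = \<Gamma>0^+ \<Gamma>0, A' = (I - P) A (I - P) and y = \<Gamma>0 G^-1 h, and let u \<in> (I - P)K solve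
  the compressed equation (A' - z) u = (I - P) A y. Then (A - z)(u - y) = P w with
  w = A u - (A - z) y, so Q(z) applied to -Qhat(z) h = -G^-1 \<Gamma>0^+ w gives \<Gamma>0^+ (y - u) = h,
  as \<Gamma>0^+ vanishes on (I - P)K. Conversely, for x = (A - z)^-1 \<Gamma>0 h the vector P x - x solves
  the compressed equation with right side (I - P) A P x, and unwinding gives
  -Qhat(z) (Q(z) h) = h. So -Qhat(z) is a two-sided inverse of Q(z), bounded because all its
  ingredients are; \<Gamma>0^+ is bounded as the adjoint of the bounded map J \<Gamma>0. The identity is
  purely algebraic: neither the self-adjointness of A nor the finiteness of the negative index
  is used.
\<close>

lemma clinear_additive: "clinear f \<Longrightarrow> Modules.additive f"
  by (simp add: clinear_def Modules.additive_def)

lemma clinear_add: "clinear f \<Longrightarrow> f (x + y) = f x + f y"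
  by (simp add: clinear_def)

lemma clinear_scaleC: "clinear f \<Longrightarrow> f (a *\<^sub>C x) = a *\<^sub>C f x"
  by (simp add: clinear_def)

lemma clinear_diff: "clinear f \<Longrightarrow> f (x - y) = f x - f y"
  by (rule Modules.additive.diff[OF clinear_additive])

lemma clinear_minus: "clinear f \<Longrightarrow> f (- x) = - f x"
  by (rule Modules.additive.minus[OF clinear_additive])

lemma clinear_zero: "clinear f \<Longrightarrow> f 0 = 0"
  by (rule Modules.additive.zero[OF clinear_additive])

lemma clinear_compose: "clinear f \<Longrightarrow> clinear g \<Longrightarrow> clinear (\<lambda>x. f (g x))"
  by (simp add: clinear_def)

lemma clinear_inverse:
  assumes f: "clinear f" and fg: "\<And>y. f (g y) = y" and gf: "\<And>x. g (f x) = x"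
  shows "clinear g"
  unfolding clinear_def
proof (intro conjI allI)
  fix a x y
  show "g (x + y) = g x + g y"
    by (metis fg gf clinear_add[OF f])
  show "g (a *\<^sub>C x) = a *\<^sub>C g x"
    by (metis fg gf clinear_scaleC[OF f])
qed

lemma additive_scaleC: "Modules.additive (\<lambda>x. c *\<^sub>C (x::'a::complex_vector))"
  by (simp add: Modules.additive_def scaleC_add_right)

lemma scaleC_diff_right: "c *\<^sub>C ((x::'a::complex_vector) - y) = c *\<^sub>C x - c *\<^sub>C y"
  by (rule Modules.additive.diff[OF additive_scaleC])

lemma scaleC_zero_right: "c *\<^sub>C (0::'a::complex_vector) = 0"
  by (rule Modules.additive.zero[OF additive_scaleC])

lemma cinner_add_right: "cinner (x::'a::complex_inner) (y + z) = cinner x y + cinner x z"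
  by (metis cinner_add_left cinner_commute complex_cnj_add)

lemma cinner_scaleC_right: "cinner (x::'a::complex_inner) (a *\<^sub>C y) = a * cinner x y"
  by (metis cinner_commute cinner_scaleC_left complex_cnj_cnj complex_cnj_mult)

lemma cinner_diff_left: "cinner ((x::'a::complex_inner) - y) z = cinner x z - cinner y z"
  using cinner_add_left[of "x - y" y z] by simp

lemma cinner_diff_right: "cinner (x::'a::complex_inner) (y - z) = cinner x y - cinner x z"
  using cinner_add_right[of x "y - z" z] by simp

lemma cinner_scaleR_left: "cinner (r *\<^sub>R (x::'a::complex_inner)) y = complex_of_real r * cinner x y"
  by (simp add: scaleR_scaleC cinner_scaleC_left)

lemma cinner_scaleR_right: "cinner (x::'a::complex_inner) (r *\<^sub>R y) = complex_of_real r * cinner x y"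
  by (simp add: scaleR_scaleC cinner_scaleC_right)

lemma power2_norm_eq_cinner: "(norm (x::'a::complex_inner))\<^sup>2 = Re (cinner x x)"
  by (simp add: norm_eq_sqrt_cinner cinner_ge_zero)

lemma cinner_right_ext: "(\<And>h. cinner h a = cinner h b) \<Longrightarrow> (a::'a::complex_inner) = b"
  by (metis cinner_diff_right cinner_eq_zero_iff eq_iff_diff_eq_0)

lemma norm_scaleC: "norm (a *\<^sub>C (x::'a::complex_inner)) = cmod a * norm x"
proof -
  have "cinner (a *\<^sub>C x) (a *\<^sub>C x) = (a * cnj a) * cinner x x"
    by (simp add: cinner_scaleC_left cinner_scaleC_right mult_ac)
  also have "a * cnj a = complex_of_real ((cmod a)\<^sup>2)"
    by (rule complex_norm_square[symmetric])
  finally have "(norm (a *\<^sub>C x))\<^sup>2 = (cmod a * norm x)\<^sup>2"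
    by (simp add: power2_norm_eq_cinner power_mult_distrib)
  then show ?thesis
    by (rule power2_eq_imp_eq) simp_all
qed

lemma Re_cinner_le_norm: "Re (cinner (a::'a::complex_inner) b) \<le> norm a * norm b"
proof (cases "a = 0 \<or> b = 0")
  case True
  then show ?thesis
    using cinner_diff_left[of a a b] cinner_diff_right[of a b b] by auto
next
  case False
  then have na: "norm a > 0" and nb: "norm b > 0" by auto
  define t where "t = norm a / norm b"
  have sym: "Re (cinner b a) = Re (cinner a b)"
    by (subst cinner_commute) simp
  have "0 \<le> Re (cinner (a - t *\<^sub>R b) (a - t *\<^sub>R b))" by (rule cinner_ge_zero)
  also have "\<dots> = Re (cinner a a) - 2 * t * Re (cinner a b) + t\<^sup>2 * Re (cinner b b)"
    by (simp add: cinner_diff_left cinner_diff_right cinner_scaleR_left cinner_scaleR_right sym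
        power2_eq_square algebra_simps)
  also have "\<dots> = 2 * (norm a)\<^sup>2 - 2 * t * Re (cinner a b)"
    using nb by (simp add: power2_norm_eq_cinner[symmetric] t_def power_divide)
  finally have "t * Re (cinner a b) \<le> (norm a)\<^sup>2" by simp
  then have "norm a * Re (cinner a b) \<le> norm a * (norm a * norm b)"
    using nb by (simp add: t_def field_simps power2_eq_square)
  then show ?thesis
    using na by (rule mult_left_le_imp_le)
qed

text \<open>Boundedness separated from linearity: -Qhat(z) is shown bounded before it is known to be
  linear, and the compressed resolvent is only bounded on (I - P)K.\<close>
definition bounded_map :: "('a::real_normed_vector \<Rightarrow> 'b::real_normed_vector) \<Rightarrow> bool" where
  "bounded_map f \<longleftrightarrow> (\<exists>C. \<forall>x. norm (f x) \<le> norm x * C)"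

lemma bounded_clinear_iff: "bounded_clinear f \<longleftrightarrow> clinear f \<and> bounded_map f"
  by (simp add: bounded_clinear_def bounded_map_def)

lemma bounded_map_pos: "bounded_map f \<Longrightarrow> \<exists>C>0. \<forall>x. norm (f x) \<le> norm x * C"
proof -
  assume "bounded_map f"
  then obtain C where C: "\<forall>x. norm (f x) \<le> norm x * C" by (auto simp: bounded_map_def)
  have "\<forall>x. norm (f x) \<le> norm x * max C 1"
    by (metis C order_trans max.cobounded1 mult_left_mono norm_ge_zero)
  then show ?thesis by (intro exI[of _ "max C 1"]) auto
qed

lemma bounded_map_compose: "bounded_map f \<Longrightarrow> bounded_map g \<Longrightarrow> bounded_map (\<lambda>x. f (g x))"
proof -
  assume "bounded_map f" "bounded_map g"
  then obtain C D where C: "C > 0" "\<And>x. norm (f x) \<le> norm x * C"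
    and D: "\<And>x. norm (g x) \<le> norm x * D"
    using bounded_map_pos by (metis bounded_map_def)
  have "norm (f (g x)) \<le> norm x * (D * C)" for x
  proof -
    have "norm (f (g x)) \<le> norm (g x) * C" by (rule C(2))
    also have "\<dots> \<le> norm x * D * C" using C(1) D[of x] by simp
    finally show ?thesis by (simp add: mult.assoc)
  qed
  then show ?thesis unfolding bounded_map_def by blast
qed

lemma bounded_map_diff: "bounded_map f \<Longrightarrow> bounded_map g \<Longrightarrow> bounded_map (\<lambda>x. f x - g x)"
proof -
  assume "bounded_map f" "bounded_map g"
  then obtain C D where C: "\<And>x. norm (f x) \<le> norm x * C"
    and D: "\<And>x. norm (g x) \<le> norm x * D" by (auto simp: bounded_map_def)
  have "norm (f x - g x) \<le> norm x * (C + D)" for x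
  proof -
    have "norm (f x - g x) \<le> norm (f x) + norm (g x)" by (rule norm_triangle_ineq4)
    also have "\<dots> \<le> norm x * C + norm x * D" using C D by (rule add_mono)
    finally show ?thesis by (simp add: distrib_left)
  qed
  then show ?thesis unfolding bounded_map_def by blast
qed

lemma bounded_map_minus: "bounded_map f \<Longrightarrow> bounded_map (\<lambda>x. - f x)"
  by (simp add: bounded_map_def)

lemma bounded_map_scaleC:
  "bounded_map f \<Longrightarrow> bounded_map (\<lambda>x. c *\<^sub>C (f x :: 'b::complex_inner))"
proof -
  assume "bounded_map f"
  then obtain C where C: "\<And>x. norm (f x) \<le> norm x * C" by (auto simp: bounded_map_def)
  have "norm (c *\<^sub>C f x) \<le> norm x * (cmod c * C)" for x
    using mult_left_mono[OF C[of x] norm_ge_zero[of c]] by (simp add: norm_scaleC mult_ac)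
  then show ?thesis unfolding bounded_map_def by blast
qed

lemma clinear_adjoint:
  assumes "\<And>h k. cinner h (B k) = cinner (C h) (k::'k::complex_inner)"
  shows "clinear B"
  unfolding clinear_def
  by (intro conjI allI; rule cinner_right_ext)
    (simp_all add: assms cinner_add_right cinner_scaleC_right)

lemma bounded_map_adjoint:
  assumes adj: "\<And>h k. cinner h (B k) = cinner (C h) (k::'k::complex_inner)"
    and "bounded_map C"
  shows "bounded_map B"
proof -
  obtain c where c: "c > 0" "\<forall>x. norm (C x) \<le> norm x * c"
    using bounded_map_pos[OF \<open>bounded_map C\<close>] by blast
  have "norm (B k) * norm (B k) \<le> norm (B k) * (norm k * c)" for k
  proof -
    have "norm (B k) * norm (B k) = Re (cinner (C (B k)) k)"
      using power2_norm_eq_cinner[of "B k"] adj[of "B k" k] by (simp add: power2_eq_square)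
    also have "\<dots> \<le> norm (C (B k)) * norm k" by (rule Re_cinner_le_norm)
    also have "\<dots> \<le> norm (B k) * c * norm k"
      using c by (simp add: mult_right_mono)
    finally show ?thesis by (simp add: mult_ac)
  qed
  then have "norm (B k) \<le> norm k * c" for k
  proof (cases "B k = 0")
    case False
    then show ?thesis
      using \<open>norm (B k) * norm (B k) \<le> norm (B k) * (norm k * c)\<close>
      by (simp add: mult_left_le_imp_le)
  qed (use c(1) in simp)
  then show ?thesis unfolding bounded_map_def by blast
qed

lemma resolvent_op_eq:
  assumes "in_resolvent_set M T z" "v \<in> M"
  shows "T (resolvent_op M T z v) - z *\<^sub>C resolvent_op M T z v = v"
  using bij_betw_inv_into_right[of "\<lambda>x. T x - z *\<^sub>C x" M M v] assms
  by (simp add: in_resolvent_set_def resolvent_op_def)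

lemma resolvent_op_apply:
  assumes "in_resolvent_set M T z" "u \<in> M"
  shows "resolvent_op M T z (T u - z *\<^sub>C u) = u"
  using bij_betw_inv_into_left[of "\<lambda>x. T x - z *\<^sub>C x" M M u] assms
  by (simp add: in_resolvent_set_def resolvent_op_def)

lemma resolvent_op_mem:
  assumes "in_resolvent_set M T z" "v \<in> M"
  shows "resolvent_op M T z v \<in> M"
  using bij_betwE[OF bij_betw_inv_into[of "\<lambda>x. T x - z *\<^sub>C x" M M]] assms
  by (simp add: in_resolvent_set_def resolvent_op_def)

lemma clinear_resolvent_op:
  assumes T: "clinear T" and z: "in_resolvent_set UNIV T z"
  shows "clinear (resolvent_op UNIV T z)"
proof (rule clinear_inverse)
  show "clinear (\<lambda>x. T x - z *\<^sub>C x)"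
    unfolding clinear_def
    by (simp add: clinear_add[OF T] clinear_scaleC[OF T] scaleC_add_right scaleC_diff_right
        scaleC_scaleC mult.commute algebra_simps)
qed (simp_all add: resolvent_op_eq[OF z] resolvent_op_apply[OF z])

lemma bounded_map_resolvent_op_compose:
  assumes z: "in_resolvent_set M T z" and gM: "\<And>x. g x \<in> M" and g: "bounded_map g"
  shows "bounded_map (\<lambda>x. resolvent_op M T z (g x))"
proof -
  obtain C where C: "\<forall>y\<in>M. norm (resolvent_op M T z y) \<le> C * norm y"
    using z by (auto simp: in_resolvent_set_def)
  obtain D where D: "\<forall>x. norm (g x) \<le> norm x * D"
    using g by (auto simp: bounded_map_def)
  have "norm (resolvent_op M T z (g x)) \<le> norm x * (D * max C 0)" for x
  proof -
    have "norm (resolvent_op M T z (g x)) \<le> C * norm (g x)"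
      using C gM[of x] by blast
    also have "\<dots> \<le> norm (g x) * max C 0"
      by (simp add: mult.commute mult_right_mono)
    also have "\<dots> \<le> norm x * D * max C 0"
      using D by (simp add: mult_right_mono)
    finally show ?thesis by (simp add: mult.assoc)
  qed
  then show ?thesis unfolding bounded_map_def by blast
qed

locale compression_data =
  fixes \<Gamma>0 :: "'h::{complex_vector,real_normed_vector} \<Rightarrow> 'k::complex_hilbert"
    and \<Gamma>p :: "'k \<Rightarrow> 'h"
    and Ginv :: "'h \<Rightarrow> 'h"
    and A :: "'k \<Rightarrow> 'k"
  assumes clinear_\<Gamma>0: "clinear \<Gamma>0"
    and clinear_\<Gamma>p: "clinear \<Gamma>p"
    and clinear_Ginv: "clinear Ginv"
    and clinear_A: "clinear A"
    and \<Gamma>p_\<Gamma>0_Ginv: "\<And>h. \<Gamma>p (\<Gamma>0 (Ginv h)) = h"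
    and Ginv_\<Gamma>p_\<Gamma>0: "\<And>h. Ginv (\<Gamma>p (\<Gamma>0 h)) = h"
begin

definition proj :: "'k \<Rightarrow> 'k" where
  "proj x = \<Gamma>0 (Ginv (\<Gamma>p x))"

definition compl_space :: "'k set" where
  "compl_space = range (\<lambda>x. x - proj x)"

definition compression :: "'k \<Rightarrow> 'k" where
  "compression x = A (x - proj x) - proj (A (x - proj x))"

definition Qfun :: "complex \<Rightarrow> 'h \<Rightarrow> 'h" where
  "Qfun z h = \<Gamma>p (resolvent_op UNIV A z (\<Gamma>0 h))"

definition Qhat :: "complex \<Rightarrow> 'h \<Rightarrow> 'h" where
  "Qhat z h =
     (let y = \<Gamma>0 (Ginv h)
      in Ginv (\<Gamma>p (A (resolvent_op compl_space compression z (A y - proj (A y))) - (A y - z *\<^sub>C y))))"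

lemmas A_linear = clinear_add[OF clinear_A] clinear_diff[OF clinear_A] clinear_minus[OF clinear_A]
  clinear_scaleC[OF clinear_A]
lemmas \<Gamma>p_linear = clinear_add[OF clinear_\<Gamma>p] clinear_diff[OF clinear_\<Gamma>p]
  clinear_minus[OF clinear_\<Gamma>p] clinear_scaleC[OF clinear_\<Gamma>p] clinear_zero[OF clinear_\<Gamma>p]

lemma clinear_proj: "clinear proj"
  unfolding proj_def[abs_def]
  by (rule clinear_compose[OF clinear_\<Gamma>0 clinear_compose[OF clinear_Ginv clinear_\<Gamma>p]])

lemmas proj_linear = clinear_add[OF clinear_proj] clinear_diff[OF clinear_proj]
  clinear_minus[OF clinear_proj] clinear_scaleC[OF clinear_proj]

lemma proj_\<Gamma>0 [simp]: "proj (\<Gamma>0 h) = \<Gamma>0 h"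
  by (simp add: proj_def Ginv_\<Gamma>p_\<Gamma>0)

lemma \<Gamma>p_proj [simp]: "\<Gamma>p (proj x) = \<Gamma>p x"
  by (simp add: proj_def \<Gamma>p_\<Gamma>0_Ginv)

lemma proj_proj [simp]: "proj (proj x) = proj x"
  by (simp add: proj_def \<Gamma>p_\<Gamma>0_Ginv)

lemma mem_compl_space_iff: "u \<in> compl_space \<longleftrightarrow> proj u = 0"
proof
  assume "u \<in> compl_space"
  then show "proj u = 0"
    by (auto simp: compl_space_def proj_linear)
next
  assume "proj u = 0"
  then show "u \<in> compl_space"
    using rangeI[of "\<lambda>x. x - proj x" u] by (simp add: compl_space_def)
qed

lemma \<Gamma>p_eq_0_if_proj_eq_0: "proj u = 0 \<Longrightarrow> \<Gamma>p u = 0"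
  using \<Gamma>p_proj[of u] by (simp add: \<Gamma>p_linear)

lemma compression_eq: "proj u = 0 \<Longrightarrow> compression u = A u - proj (A u)"
  by (simp add: compression_def)

lemma clinear_Qfun: "in_resolvent_set UNIV A z \<Longrightarrow> clinear (Qfun z)"
  unfolding Qfun_def[abs_def]
  by (rule clinear_compose[OF clinear_\<Gamma>p clinear_compose[OF clinear_resolvent_op clinear_\<Gamma>0]])
    (rule clinear_A)

lemma Qfun_neg_Qhat:
  assumes zA: "in_resolvent_set UNIV A z"
    and zAt: "in_resolvent_set compl_space compression z"
  shows "Qfun z (- Qhat z h) = h"
proof -
  define y where "y = \<Gamma>0 (Ginv h)"
  define u where "u = resolvent_op compl_space compression z (A y - proj (A y))"
  define w where "w = A u - (A y - z *\<^sub>C y)"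
  have "A y - proj (A y) \<in> compl_space"
    by (simp add: compl_space_def)
  then have u: "u \<in> compl_space" and "compression u - z *\<^sub>C u = A y - proj (A y)"
    using zAt by (simp_all add: u_def resolvent_op_mem resolvent_op_eq)
  moreover from u have Pu: "proj u = 0"
    by (simp add: mem_compl_space_iff)
  ultimately have u_eq: "A u - proj (A u) - z *\<^sub>C u = A y - proj (A y)"
    by (simp add: compression_eq)
  \<comment> \<open>u - y solves the full resolvent equation with a right side in the range of proj.\<close>
  have "A (u - y) - z *\<^sub>C (u - y) = proj w"
    using u_eq by (simp add: w_def y_def A_linear proj_linear scaleC_diff_right algebra_simps)
  then have R: "resolvent_op UNIV A z (proj w) = u - y"
    using resolvent_op_apply[OF zA, of "u - y"] by simp
  have "\<Gamma>0 (- Qhat z h) = - proj w"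
    by (simp add: Qhat_def Let_def y_def u_def w_def proj_def clinear_minus[OF clinear_\<Gamma>0])
  then have "Qfun z (- Qhat z h) = \<Gamma>p (y - u)"
    by (simp add: Qfun_def clinear_minus[OF clinear_resolvent_op[OF clinear_A zA]] R)
  also have "\<dots> = h"
    by (simp add: \<Gamma>p_linear \<Gamma>p_eq_0_if_proj_eq_0[OF Pu] y_def \<Gamma>p_\<Gamma>0_Ginv)
  finally show ?thesis .
qed

lemma neg_Qhat_Qfun:
  assumes zA: "in_resolvent_set UNIV A z"
    and zAt: "in_resolvent_set compl_space compression z"
  shows "- Qhat z (Qfun z h) = h"
proof -
  define x where "x = resolvent_op UNIV A z (\<Gamma>0 h)"
  have x: "A x - z *\<^sub>C x = \<Gamma>0 h"
    using resolvent_op_eq[OF zA] by (simp add: x_def)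
  have y: "\<Gamma>0 (Ginv (Qfun z h)) = proj x"
    by (simp add: Qfun_def x_def proj_def)
  have Ax: "A x - proj (A x) = z *\<^sub>C (x - proj x)"
  proof -
    have "(A x - z *\<^sub>C x) - proj (A x - z *\<^sub>C x) = 0"
      by (simp add: x)
    then show ?thesis
      by (simp add: proj_linear scaleC_diff_right algebra_simps)
  qed
  \<comment> \<open>Since A x - z x = \<Gamma>0 h is fixed by proj, u solves the compressed resolvent equation.\<close>
  define u where "u = proj x - x"
  have Pu: "proj u = 0"
    by (simp add: u_def proj_linear)
  have "compression u - z *\<^sub>C u = A (proj x) - proj (A (proj x))"
    using Ax unfolding compression_eq[OF Pu]
    by (simp add: u_def A_linear proj_linear scaleC_diff_right algebra_simps)
  then have Rt: "resolvent_op compl_space compression z (A (proj x) - proj (A (proj x))) = u"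
    using resolvent_op_apply[OF zAt, of u] Pu by (simp add: mem_compl_space_iff)
  have "A u - (A (proj x) - z *\<^sub>C proj x) = - \<Gamma>0 h - z *\<^sub>C (x - proj x)"
    by (simp add: u_def A_linear scaleC_diff_right flip: x)
  then have "\<Gamma>p (A u - (A (proj x) - z *\<^sub>C proj x)) = - \<Gamma>p (\<Gamma>0 h)"
    by (simp add: \<Gamma>p_linear scaleC_zero_right)
  then have "Qhat z (Qfun z h) = Ginv (- \<Gamma>p (\<Gamma>0 h))"
    by (simp add: Qhat_def y Rt)
  then show ?thesis
    by (simp add: clinear_minus[OF clinear_Ginv] Ginv_\<Gamma>p_\<Gamma>0)
qed

lemma inv_Qfun:
  assumes "in_resolvent_set UNIV A z" "in_resolvent_set compl_space compression z"
  shows "bij (Qfun z)" and "inv (Qfun z) = (\<lambda>h. - Qhat z h)"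
proof -
  have "Qfun z \<circ> (\<lambda>h. - Qhat z h) = id" and "(\<lambda>h. - Qhat z h) \<circ> Qfun z = id"
    using Qfun_neg_Qhat[OF assms] neg_Qhat_Qfun[OF assms] by (simp_all add: fun_eq_iff)
  then show "bij (Qfun z)" and "inv (Qfun z) = (\<lambda>h. - Qhat z h)"
    by (auto intro: o_bij inv_unique_comp)
qed

lemma bounded_map_Qhat:
  assumes \<Gamma>0: "bounded_map \<Gamma>0" and \<Gamma>p: "bounded_map \<Gamma>p" and Ginv: "bounded_map Ginv"
    and A: "bounded_map A" and zAt: "in_resolvent_set compl_space compression z"
  shows "bounded_map (Qhat z)"
proof -
  have Y: "bounded_map (\<lambda>h. \<Gamma>0 (Ginv h))"
    by (rule bounded_map_compose[OF \<Gamma>0 Ginv])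
  have AY: "bounded_map (\<lambda>h. A (\<Gamma>0 (Ginv h)))"
    by (rule bounded_map_compose[OF A Y])
  have P: "bounded_map proj"
    unfolding proj_def[abs_def] by (rule bounded_map_compose[OF \<Gamma>0 bounded_map_compose[OF Ginv \<Gamma>p]])
  have "bounded_map (\<lambda>h. A (\<Gamma>0 (Ginv h)) - proj (A (\<Gamma>0 (Ginv h))))"
    by (rule bounded_map_diff[OF AY bounded_map_compose[OF P AY]])
  then have U: "bounded_map (\<lambda>h. resolvent_op compl_space compression z
                                 (A (\<Gamma>0 (Ginv h)) - proj (A (\<Gamma>0 (Ginv h)))))"
    by (rule bounded_map_resolvent_op_compose[OF zAt, rotated]) (simp add: compl_space_def)
  show ?thesis
    unfolding Qhat_def[abs_def] Let_def
    by (rule bounded_map_compose[OF Ginv bounded_map_compose[OF \<Gamma>p bounded_map_diff[OF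
          bounded_map_compose[OF A U] bounded_map_diff[OF AY bounded_map_scaleC[OF Y]]]]])
qed

lemma Qfun_boundedly_invertible:
  assumes "bounded_clinear \<Gamma>0" "bounded_clinear \<Gamma>p" "bounded_clinear Ginv" "bounded_clinear A"
    and zA: "in_resolvent_set UNIV A z" and zAt: "in_resolvent_set compl_space compression z"
  shows "boundedly_invertible (Qfun z)"
proof -
  have "bounded_map (\<lambda>h. - Qhat z h)"
    using assms by (simp add: bounded_clinear_iff bounded_map_Qhat bounded_map_minus)
  moreover have "clinear (\<lambda>h. - Qhat z h)"
    by (rule clinear_inverse[OF clinear_Qfun[OF zA]])
      (simp_all add: Qfun_neg_Qhat neg_Qhat_Qfun zA zAt)
  ultimately show ?thesis
    using inv_Qfun[OF zA zAt] by (simp add: boundedly_invertible_def bounded_clinear_iff)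
qed

end

theorem theorem2:
  fixes \<Gamma>0 :: "'h::complex_hilbert \<Rightarrow> 'k::complex_hilbert"
    and \<Gamma>p :: "'k \<Rightarrow> 'h"
    and J A :: "'k \<Rightarrow> 'k"
    and z :: complex
  assumes J: "pontryagin_symmetry J"
    and A_bdd: "bounded_clinear A"
    and A_sa: "\<forall>x y. kinner J (A x) y = kinner J x (A y)"
    and \<Gamma>0_bdd: "bounded_clinear \<Gamma>0"
    and \<Gamma>p_adj: "\<forall>h k. cinner h (\<Gamma>p k) = kinner J (\<Gamma>0 h) k"
    and G_inv: "boundedly_invertible (\<Gamma>p \<circ> \<Gamma>0)"
  defines "Q \<equiv> \<lambda>w h. \<Gamma>p (resolvent_op UNIV A w (\<Gamma>0 h))"
    and "Ginv \<equiv> inv (\<Gamma>p \<circ> \<Gamma>0)"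
  defines "P \<equiv> \<lambda>x. \<Gamma>0 (Ginv (\<Gamma>p x))"
  defines "At \<equiv> \<lambda>x. A (x - P x) - P (A (x - P x))"
    and "M \<equiv> range (\<lambda>x. x - P x)"
  assumes z_A: "in_resolvent_set UNIV A z"
    and z_At: "in_resolvent_set M At z"
  shows "boundedly_invertible (Q z) \<and>
         (\<forall>h. - inv (Q z) h =
            Ginv (\<Gamma>p (A (resolvent_op M At z (A (\<Gamma>0 (Ginv h)) - P (A (\<Gamma>0 (Ginv h)))))
                    - (A (\<Gamma>0 (Ginv h)) - z *\<^sub>C \<Gamma>0 (Ginv h)))))"
proof -
  have \<Gamma>p_adj': "\<And>h k. cinner h (\<Gamma>p k) = cinner (J (\<Gamma>0 h)) k"
    using \<Gamma>p_adj by (simp add: kinner_def)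
  have "bounded_map (\<lambda>h. J (\<Gamma>0 h))"
    using J \<Gamma>0_bdd by (simp add: pontryagin_symmetry_def bounded_clinear_iff bounded_map_compose)
  then have \<Gamma>p_bdd: "bounded_clinear \<Gamma>p"
    by (simp add: bounded_clinear_iff clinear_adjoint[OF \<Gamma>p_adj'] bounded_map_adjoint[OF \<Gamma>p_adj'])
  have Ginv_bdd: "bounded_clinear Ginv"
    using G_inv by (simp add: boundedly_invertible_def Ginv_def)
  have bij: "bij (\<Gamma>p \<circ> \<Gamma>0)"
    using G_inv by (simp add: boundedly_invertible_def)
  interpret compression_data \<Gamma>0 \<Gamma>p Ginv A
  proof
    show "\<Gamma>p (\<Gamma>0 (Ginv h)) = h" for h
      using surj_f_inv_f[OF bij_is_surj[OF bij]] by (simp add: Ginv_def)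
    show "Ginv (\<Gamma>p (\<Gamma>0 h)) = h" for h
      using inv_f_f[OF bij_is_inj[OF bij]] by (simp add: Ginv_def)
  qed (use \<Gamma>0_bdd \<Gamma>p_bdd Ginv_bdd A_bdd in \<open>simp_all add: bounded_clinear_iff\<close>)
  have "P = proj"
    by (simp add: fun_eq_iff P_def proj_def)
  then have "Q = Qfun" "At = compression" "M = compl_space"
    by (simp_all add: fun_eq_iff Q_def Qfun_def At_def compression_def M_def compl_space_def)
  with \<open>P = proj\<close> show ?thesis
    using Qfun_boundedly_invertible[OF \<Gamma>0_bdd \<Gamma>p_bdd Ginv_bdd A_bdd z_A] inv_Qfun(2)[OF z_A] z_At
    by (simp add: Qhat_def Let_def)
qed

end
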